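(* Let $G_H$ be a finite undirected multigraph (parallel edges allowed, no self-loops) with vertex set $V$ and edge set partitioned as $E = S \sqcup S^c$ into secure edges $S$ and insecure edges $S^c$, and let $0 < p_J^{S^c} \le p_I$ be real costs. Let $C^*$ be a cut of minimum cardinality among the cuts of $G_H$ containing no secure edges. Then the attack $(C^*, J, I)$ with $I = \{e\}$ for some edge $e \in C^*$ and $J = C^* \setminus\{e\}$ is an optimal hidden jamming attack, for all such costs $p_I$ and $p_J^{S^c}$.
   Context: For a nonempty proper subset $U \subsetneq V$, the cut $\delta(U)$ is the set of edges with exactly one endpoint in $U$; a cut is any set of this form. A jamming attack is a triple $(C,J,I)$ where $C$ is a cut, $J \subseteq C \cap S^c$ is a set of jammed insecure edges, and $I \subseteq (C \cap S^c)\setminus J$ is a nonempty set of insecure edges into which data is injected; its cost is $p_J^{S^c}|J| + p_I|I|$. It is hidden if $I \cup J = C$. An optimal hidden jamming attack is one of minimum cost among all hidden jamming attacks. *)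

theory Defs
  imports Complex_Main
begin

text \<open>A finite undirected multigraph: vertex set V, edge set E (edges are abstract
objects, so parallel edges are allowed), and ends e = the two endpoints of e
(the order in the pair is irrelevant for everything below).\<close>

definition multigraph :: "'v set \<Rightarrow> 'e set \<Rightarrow> ('e \<Rightarrow> 'v \<times> 'v) \<Rightarrow> bool" where
  "multigraph V E ends \<longleftrightarrow> finite V \<and> finite E \<and>
     (\<forall>e\<in>E. fst (ends e) \<in> V \<and> snd (ends e) \<in> V \<and> fst (ends e) \<noteq> snd (ends e))"

definition delta :: "'e set \<Rightarrow> ('e \<Rightarrow> 'v \<times> 'v) \<Rightarrow> 'v set \<Rightarrow> 'e set" where
  "delta E ends U = {e \<in> E. (fst (ends e) \<in> U) \<noteq> (snd (ends e) \<in> U)}"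

definition is_cut :: "'v set \<Rightarrow> 'e set \<Rightarrow> ('e \<Rightarrow> 'v \<times> 'v) \<Rightarrow> 'e set \<Rightarrow> bool" where
  "is_cut V E ends C \<longleftrightarrow> (\<exists>U. U \<noteq> {} \<and> U \<subset> V \<and> C = delta E ends U)"

definition jamming_attack ::
  "'v set \<Rightarrow> 'e set \<Rightarrow> ('e \<Rightarrow> 'v \<times> 'v) \<Rightarrow> 'e set \<Rightarrow> 'e set \<times> 'e set \<times> 'e set \<Rightarrow> bool" where
  "jamming_attack V E ends S A \<longleftrightarrow> (case A of (C, J, I) \<Rightarrow>
     is_cut V E ends C \<and> J \<subseteq> C \<inter> (E - S) \<and> I \<subseteq> (C \<inter> (E - S)) - J \<and> I \<noteq> {})"

definition attack_cost :: "real \<Rightarrow> real \<Rightarrow> 'e set \<times> 'e set \<times> 'e set \<Rightarrow> real" where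
  "attack_cost pJ pI A = (case A of (C, J, I) \<Rightarrow> pJ * real (card J) + pI * real (card I))"

definition hidden :: "'e set \<times> 'e set \<times> 'e set \<Rightarrow> bool" where
  "hidden A \<longleftrightarrow> (case A of (C, J, I) \<Rightarrow> I \<union> J = C)"

definition optimal_hidden_jamming_attack ::
  "'v set \<Rightarrow> 'e set \<Rightarrow> ('e \<Rightarrow> 'v \<times> 'v) \<Rightarrow> 'e set \<Rightarrow> real \<Rightarrow> real
   \<Rightarrow> 'e set \<times> 'e set \<times> 'e set \<Rightarrow> bool" where
  "optimal_hidden_jamming_attack V E ends S pJ pI A \<longleftrightarrow>
     jamming_attack V E ends S A \<and> hidden A \<and>
     (\<forall>A'. jamming_attack V E ends S A' \<and> hidden A' \<longrightarrow> attack_cost pJ pI A \<le> attack_cost pJ pI A')"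

end

theory Submission
  imports Defs
begin

text \<open>A hidden attack (C, J, I) splits C into the disjoint parts I and J, so its cut contains
no secure edge, and since injecting costs at least as much as jamming while at least one edge
is injected, its cost is at least pJ (|C| - 1) + pI. This bound grows with |C| and is attained by
jamming all but one edge of a minimum cut free of secure edges and injecting into the last one.\<close>

lemma cut_subset_edges: "is_cut V E ends C \<Longrightarrow> C \<subseteq> E"
  by (auto simp: is_cut_def delta_def)

lemma finite_cut:
  assumes "multigraph V E ends" and "is_cut V E ends C"
  shows "finite C"
  using assms(1) cut_subset_edges[OF assms(2)] by (auto simp: multigraph_def intro: finite_subset)

lemma attack_cost_single_injection:
  assumes "finite C" and "e \<in> C"
  shows "attack_cost pJ pI (C, C - {e}, {e}) = pJ * (real (card C) - 1) + pI"
proof -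
  have "card C \<ge> 1"
    using assms card_gt_0_iff by (metis One_nat_def Suc_leI empty_iff)
  then show ?thesis
    using assms by (simp add: attack_cost_def card_Diff_singleton)
qed

lemma single_injection_hidden_jamming_attack:
  assumes "is_cut V E ends C" and "C \<inter> S = {}" and "e \<in> C"
  shows "jamming_attack V E ends S (C, C - {e}, {e})" and "hidden (C, C - {e}, {e})"
  using assms cut_subset_edges[OF assms(1)] by (auto simp: jamming_attack_def hidden_def)

lemma hidden_jamming_attack_cut_disjoint_secure:
  assumes "jamming_attack V E ends S (C, J, I)" and "hidden (C, J, I)"
  shows "C \<inter> S = {}"
  using assms by (auto simp: jamming_attack_def hidden_def)

lemma hidden_jamming_attack_cost_lower_bound:
  assumes "jamming_attack V E ends S (C, J, I)" and "hidden (C, J, I)"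
    and "finite C" and "pJ \<le> pI"
  shows "pJ * (real (card C) - 1) + pI \<le> attack_cost pJ pI (C, J, I)"
proof -
  have C: "C = I \<union> J" and disj: "I \<inter> J = {}" and "I \<noteq> {}"
    using assms(1,2) by (auto simp: jamming_attack_def hidden_def)
  have fin: "finite I" "finite J"
    using assms(3) C by auto
  with \<open>I \<noteq> {}\<close> have I_pos: "real (card I) \<ge> 1"
    by (simp add: Suc_leI card_gt_0_iff)
  have "pJ * (real (card C) - 1) + pI = pJ * real (card J) + pJ * (real (card I) - 1) + pI"
    using C disj fin by (simp add: card_Un_disjoint algebra_simps)
  also have "\<dots> \<le> pJ * real (card J) + pI * (real (card I) - 1) + pI"
    using I_pos assms(4) by (simp add: mult_right_mono)
  also have "\<dots> = attack_cost pJ pI (C, J, I)"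
    by (simp add: attack_cost_def algebra_simps)
  finally show ?thesis .
qed

theorem theorem2:
  fixes V :: "'v set" and E :: "'e set" and ends :: "'e \<Rightarrow> 'v \<times> 'v"
    and S Cstar :: "'e set" and pJ pI :: real and e :: 'e
  assumes "multigraph V E ends"
    and "S \<subseteq> E"
    and "0 < pJ" and "pJ \<le> pI"
    and "is_cut V E ends Cstar" and "Cstar \<inter> S = {}"
    and "\<forall>C. is_cut V E ends C \<and> C \<inter> S = {} \<longrightarrow> card Cstar \<le> card C"
    and "e \<in> Cstar"
  shows "optimal_hidden_jamming_attack V E ends S pJ pI (Cstar, Cstar - {e}, {e})"
proof -
  have cost: "attack_cost pJ pI (Cstar, Cstar - {e}, {e}) = pJ * (real (card Cstar) - 1) + pI"
    using attack_cost_single_injection[OF finite_cut[OF assms(1,5)] assms(8)] .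
  have "attack_cost pJ pI (Cstar, Cstar - {e}, {e}) \<le> attack_cost pJ pI (C, J, I)"
    if attack: "jamming_attack V E ends S (C, J, I)" and hid: "hidden (C, J, I)" for C J I
  proof -
    have cut: "is_cut V E ends C"
      using attack by (simp add: jamming_attack_def)
    then have "card Cstar \<le> card C"
      using assms(7) hidden_jamming_attack_cut_disjoint_secure[OF attack hid] by blast
    then have "pJ * (real (card Cstar) - 1) + pI \<le> pJ * (real (card C) - 1) + pI"
      using assms(3) by simp
    also have "\<dots> \<le> attack_cost pJ pI (C, J, I)"
      using hidden_jamming_attack_cost_lower_bound[OF attack hid finite_cut[OF assms(1) cut] assms(4)] .
    finally show ?thesis using cost by simp
  qed
  then show ?thesis
    using single_injection_hidden_jamming_attack[OF assms(5,6,8)]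
    by (auto simp: optimal_hidden_jamming_attack_def)
qed

end
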